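(* Let $E\in\mathcal Q$ be a quasi-regular hexagon and let $P\notin\mathcal Q$ be a polyiamond with $\|P\|\ge\|E\|$. Then $p(P)>p(E)$ and $s(P)>s(E)$.
   Context: Faces are the closed triangular faces of the triangular lattice $\mathbb T^2$ in $\mathbb R^2$. A polyiamond $P$ is a finite nonempty union of faces that is connected through shared edges (two faces sharing only a vertex are not adjacent); faces not in $P$ are empty faces. Its area $\|P\|$ is the number of its faces; its edge-perimeter $p(P)$ is the number of edges of $\mathbb T^2$ separating a face of $P$ from an empty face; its site-perimeter $s(P)$ is the number of empty faces sharing at least one edge with a face of $P$. For integers $d\ge1$, $a,b,c\ge0$ with $a+b,b+c,c+a\le d$, $T^d_{a,b,c}$ is the polyiamond obtained from an equilateral triangle of side length $d$ with sides on lattice lines (the union of its $d^2$ faces) by removing the equilateral sub-triangles of side lengths $a,b,c$ at its three corners; its boundary is a (possibly degenerate) hexagon with side lengths, in cyclic order, $a,\ d-a-b,\ b,\ d-b-c,\ c,\ d-c-a$, its area is $d^2-a^2-b^2-c^2$ and its edge- and site-perimeter equal $3d-a-b-c$. Quasi-regular hexagons: for $r\ge1$ let $E(r)=T^{3r}_{r,r,r}$ (regular hexagon of side $r$), $E_{B_1}(r)=T^{3r}_{r-1,r,r}$, $E_{B_2}(r)=T^{3r+1}_{r,r,r+1}$, $E_{B_3}(r)=T^{3r+1}_{r,r,r}$, $E_{B_4}(r)=T^{3r+2}_{r,r+1,r+1}$, $E_{B_5}(r)=T^{3r+2}_{r,r,r+1}$. Their areas are $6r^2,\ 6r^2+2r-1,\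 6r^2+4r,\ 6r^2+6r+1,\ 6r^2+8r+2,\ 6r^2+10r+3$, and their edge-perimeters (equal to their site-perimeters) are $6r,6r+1,\dots,6r+5$. A quasi-regular hexagon is any image of one of these under a symmetry (translation, rotation, reflection) of $\mathbb T^2$; $\mathcal Q$ denotes the set of all quasi-regular hexagons. *)

theory Defs
  imports Main
begin

text \<open>Triangular lattice in lattice coordinates: vertex (x,y) stands for x*e1 + y*e2 with
  e1 = (1,0), e2 = (1/2, sqrt 3/2).  A face is (v, up) where for up = True it is the triangle
  with vertices v, v+e1, v+e2 and for up = False the triangle v+e1, v+e2, v+e1+e2.\<close>

type_synonym vertex = "int \<times> int"
type_synonym face = "vertex \<times> bool"

fun verts :: "face \<Rightarrow> vertex set" where
  "verts ((x, y), True) = {(x, y), (x + 1, y), (x, y + 1)}"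
| "verts ((x, y), False) = {(x + 1, y), (x, y + 1), (x + 1, y + 1)}"

definition adjacent :: "face \<Rightarrow> face \<Rightarrow> bool" where
  "adjacent f g \<longleftrightarrow> card (verts f \<inter> verts g) = 2"

definition face_connected :: "face set \<Rightarrow> bool" where
  "face_connected P \<longleftrightarrow>
     (\<forall>f\<in>P. \<forall>g\<in>P. (f, g) \<in> {(a, b). a \<in> P \<and> b \<in> P \<and> adjacent a b}\<^sup>*)"

definition polyiamond :: "face set \<Rightarrow> bool" where
  "polyiamond P \<longleftrightarrow> finite P \<and> P \<noteq> {} \<and> face_connected P"

definition area :: "face set \<Rightarrow> nat" where
  "area P = card P"

text \<open>Edges are represented by their two endpoint vertices.\<close>
definition edge_perimeter :: "face set \<Rightarrow> nat" where
  "edge_perimeter P = card {verts f \<inter> verts g | f g. f \<in> P \<and> g \<notin> P \<and> adjacent f g}"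

definition site_perimeter :: "face set \<Rightarrow> nat" where
  "site_perimeter P = card {g. g \<notin> P \<and> (\<exists>f\<in>P. adjacent f g)}"

text \<open>T^d_{a,b,c}: the big triangle with vertices (0,0),(d,0),(0,d) with corner triangles of
  side a at (0,0), b at (d,0), c at (0,d) removed. A (closed) face lies in this convex region iff
  all its vertices do.\<close>
definition in_hex_region :: "nat \<Rightarrow> nat \<Rightarrow> nat \<Rightarrow> nat \<Rightarrow> vertex \<Rightarrow> bool" where
  "in_hex_region d a b c v \<longleftrightarrow>
     (let x = fst v; y = snd v in
        0 \<le> x \<and> 0 \<le> y \<and> x + y \<le> int d \<and> int a \<le> x + y \<and> x \<le> int d - int b \<and> y \<le> int d - int c)"

definition T_hex :: "nat \<Rightarrow> nat \<Rightarrow> nat \<Rightarrow> nat \<Rightarrow> face set" where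
  "T_hex d a b c = {f. \<forall>v\<in>verts f. in_hex_region d a b c v}"

definition E0 :: "nat \<Rightarrow> face set" where "E0 r = T_hex (3*r) r r r"
definition EB1 :: "nat \<Rightarrow> face set" where "EB1 r = T_hex (3*r) (r - 1) r r"
definition EB2 :: "nat \<Rightarrow> face set" where "EB2 r = T_hex (3*r+1) r r (r+1)"
definition EB3 :: "nat \<Rightarrow> face set" where "EB3 r = T_hex (3*r+1) r r r"
definition EB4 :: "nat \<Rightarrow> face set" where "EB4 r = T_hex (3*r+2) r (r+1) (r+1)"
definition EB5 :: "nat \<Rightarrow> face set" where "EB5 r = T_hex (3*r+2) r r (r+1)"

text \<open>Symmetries of the triangular lattice: rotation by 60 degrees (e1 -> e2, e2 -> e2 - e1),
  reflection swapping e1 and e2, and translations.\<close>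
definition rot60 :: "vertex \<Rightarrow> vertex" where
  "rot60 v = (- snd v, fst v + snd v)"

definition refl :: "vertex \<Rightarrow> vertex" where
  "refl v = (snd v, fst v)"

definition vadd :: "vertex \<Rightarrow> vertex \<Rightarrow> vertex" where
  "vadd v t = (fst v + fst t, snd v + snd t)"

definition lattice_symmetries :: "(vertex \<Rightarrow> vertex) set" where
  "lattice_symmetries =
     {(\<lambda>v. vadd ((rot60 ^^ k) v) t) | k t. k < 6} \<union> {(\<lambda>v. vadd ((rot60 ^^ k) (refl v)) t) | k t. k < 6}"

definition face_image :: "(vertex \<Rightarrow> vertex) \<Rightarrow> face set \<Rightarrow> face set" where
  "face_image \<sigma> P = {g. \<exists>f\<in>P. verts g = \<sigma> ` verts f}"

definition quasi_regular :: "face set set" where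
  "quasi_regular = {face_image \<sigma> H | \<sigma> H r. \<sigma> \<in> lattice_symmetries \<and> r \<ge> 1 \<and>
      H \<in> {E0 r, EB1 r, EB2 r, EB3 r, EB4 r, EB5 r}}"

end

theory Submission
  imports Defs
begin

text \<open>Each face lies in three rows, one for each direction of lattice lines. At both ends of every
  row of \<open>P\<close> there is a boundary edge and an outer site, and no edge or site is a row end in all
  three directions; hence both perimeters of \<open>P\<close> are at least the number of rows of \<open>P\<close>. If \<open>P\<close>
  is connected, its rows in each direction form an interval, so the number of rows is the
  perimeter \<open>q = 3d - a - b - c\<close> of the smallest hexagon \<open>T\<^sup>d\<^sub>a\<^sub>,\<^sub>b\<^sub>,\<^sub>c\<close> containing \<open>P\<close>.
  For hexagons \<open>q\<^sup>2 - 6 \<cdot> area = 2((a - b)\<^sup>2 + (b - c)\<^sup>2 + (c - a)\<^sup>2) + 3(2d - q)\<^sup>2\<close>, and the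
  right-hand side is at least a defect depending only on \<open>q mod 6\<close>; quasi-regular hexagons attain
  the bound, and up to symmetry they are the only hexagons that do. So if \<open>P\<close> had a perimeter
  at most that of \<open>E\<close>, its enclosing hexagon would have at most the perimeter and at least the
  area of \<open>E\<close>, forcing it to be quasi-regular and equal to \<open>P\<close>.\<close>

section \<open>Rows of the triangular lattice\<close>

text \<open>A face lies between the lattice lines \<open>x = row_x f\<close> and \<open>x = row_x f + 1\<close>, between
  \<open>y = row_y f\<close> and \<open>y = row_y f + 1\<close>, and between \<open>x + y = row_z f\<close> and \<open>x + y = row_z f + 1\<close>.\<close>

definition row_x :: "face \<Rightarrow> int" where "row_x f = fst (fst f)"
definition row_y :: "face \<Rightarrow> int" where "row_y f = snd (fst f)"
definition row_z :: "face \<Rightarrow> int" where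
  "row_z f = fst (fst f) + snd (fst f) + (if snd f then 0 else 1)"

lemma row_simps [simp]:
  "row_x ((x, y), u) = x" "row_y ((x, y), u) = y" "row_z ((x, y), u) = x + y + (if u then 0 else 1)"
  by (simp_all add: row_x_def row_y_def row_z_def)

lemma face_eq_iff_rows:
  "f = g \<longleftrightarrow> row_x f = row_x g \<and> row_y f = row_y g \<and> row_z f = row_z g"
  by (cases f; cases g) (auto simp: row_x_def row_y_def row_z_def split: if_splits)

lemma row_z_bounds: "row_x f + row_y f \<le> row_z f" "row_z f \<le> row_x f + row_y f + 1"
  by (cases f; simp add: row_x_def row_y_def row_z_def)+

lemma adjacent_iff:
  "adjacent ((x, y), u) ((x', y'), u') \<longleftrightarrow>
    u \<noteq> u' \<and> (if u then (x', y') \<in> {(x, y - 1), (x - 1, y), (x, y)}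
                 else (x', y') \<in> {(x, y), (x + 1, y), (x, y + 1)})"
proof (cases "\<bar>x' - x\<bar> \<le> 1 \<and> \<bar>y' - y\<bar> \<le> 1")
  case True
  then have "x' \<in> {x - 1, x, x + 1}" "y' \<in> {y - 1, y, y + 1}" by auto
  then show ?thesis
    unfolding adjacent_def by (cases u; cases u') (auto simp: card_insert_if)
next
  case False
  then have "verts ((x, y), u) \<inter> verts ((x', y'), u') = {}"
    by (cases u; cases u') auto
  then show ?thesis
    using False unfolding adjacent_def by auto
qed

lemma adjacent_iff_rows:
  "adjacent f g \<longleftrightarrow>
     (row_x f = row_x g \<and> row_y f = row_y g \<and> \<bar>row_z f - row_z g\<bar> = 1) \<or>
     (row_x f = row_x g \<and> row_z f = row_z g \<and> \<bar>row_y f - row_y g\<bar> = 1) \<or>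
     (row_y f = row_y g \<and> row_z f = row_z g \<and> \<bar>row_x f - row_x g\<bar> = 1)"
  by (cases f; cases g) (auto simp: adjacent_iff split: if_splits)

lemma adjacent_sym: "adjacent f g \<longleftrightarrow> adjacent g f"
  unfolding adjacent_def by (simp add: Int_commute)

lemma adjacent_rows_close:
  assumes "adjacent f g"
  shows "\<bar>row_x f - row_x g\<bar> \<le> 1" "\<bar>row_y f - row_y g\<bar> \<le> 1" "\<bar>row_z f - row_z g\<bar> \<le> 1"
  using assms unfolding adjacent_iff_rows by auto

lemma edge_faces:
  assumes "adjacent f g" "verts f \<inter> verts g \<subseteq> verts h"
  shows "h = f \<or> h = g"
proof -
  obtain x y u x' y' u' x'' y'' u'' where
    fgh: "f = ((x, y), u)" "g = ((x', y'), u')" "h = ((x'', y''), u'')"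
    by (metis prod.collapse)
  show ?thesis
    using assms unfolding fgh adjacent_iff
    by (cases u; cases u''; clarsimp; elim disjE; clarsimp; arith)
qed

lemma finite_adjacent: "finite {g. adjacent f g}"
proof -
  have "g \<in> ({row_x f - 1..row_x f + 1} \<times> {row_y f - 1..row_y f + 1}) \<times> UNIV"
    if "adjacent f g" for g
    using adjacent_rows_close(1,2)[OF that] by (cases g) auto
  then have "{g. adjacent f g} \<subseteq> ({row_x f - 1..row_x f + 1} \<times> {row_y f - 1..row_y f + 1}) \<times> UNIV"
    by blast
  then show ?thesis by (rule finite_subset) auto
qed

definition boundary_pairs :: "face set \<Rightarrow> (face \<times> face) set" where
  "boundary_pairs P = {(f, g). f \<in> P \<and> g \<notin> P \<and> adjacent f g}"

definition boundary_sites :: "face set \<Rightarrow> face set" where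
  "boundary_sites P = {g. g \<notin> P \<and> (\<exists>f\<in>P. adjacent f g)}"

lemma finite_boundary_pairs: "finite P \<Longrightarrow> finite (boundary_pairs P)"
  by (rule finite_subset[of _ "SIGMA f:P. {g. adjacent f g}"])
    (auto simp: boundary_pairs_def finite_adjacent)

lemma finite_boundary_sites: "finite P \<Longrightarrow> finite (boundary_sites P)"
  by (rule finite_subset[of _ "\<Union>f\<in>P. {g. adjacent f g}"])
    (auto simp: boundary_sites_def finite_adjacent)

lemma edge_perimeter_eq_card: "edge_perimeter P = card (boundary_pairs P)"
proof -
  let ?edge = "\<lambda>(f, g). verts f \<inter> verts g"
  have "inj_on ?edge (boundary_pairs P)"
  proof (rule inj_onI, clarify)
    fix f g f' g'
    assume "(f, g) \<in> boundary_pairs P" "(f', g') \<in> boundary_pairs P"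
      and same: "verts f \<inter> verts g = verts f' \<inter> verts g'"
    then have "adjacent f g" "f \<in> P" "g \<notin> P" "f' \<in> P" "g' \<notin> P"
      by (auto simp: boundary_pairs_def)
    with same edge_faces[of f g f'] edge_faces[of f g g'] show "f = f' \<and> g = g'"
      by blast
  qed
  moreover have "{verts f \<inter> verts g | f g. f \<in> P \<and> g \<notin> P \<and> adjacent f g} =
      ?edge ` boundary_pairs P"
    unfolding boundary_pairs_def by fast
  ultimately show ?thesis
    unfolding edge_perimeter_def by (simp add: card_image)
qed

lemma site_perimeter_eq_card: "site_perimeter P = card (boundary_sites P)"
  unfolding site_perimeter_def boundary_sites_def by simp

locale lattice_rows =
  fixes row :: "face \<Rightarrow> int" and pos :: "face \<Rightarrow> int"
    and succ :: "face \<Rightarrow> face" and pred :: "face \<Rightarrow> face"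
  assumes row_succ [simp]: "row (succ f) = row f"
    and pos_succ [simp]: "pos (succ f) = pos f + 1"
    and pred_succ [simp]: "pred (succ f) = f"
    and succ_pred [simp]: "succ (pred f) = f"
    and row_pos_inj: "row f = row g \<Longrightarrow> pos f = pos g \<Longrightarrow> f = g"
    and adjacent_succ: "adjacent f (succ f)"
    and adjacent_same_row: "adjacent f g \<Longrightarrow> row g = row f \<Longrightarrow> g = pred f \<or> g = succ f"
begin

lemma row_pred [simp]: "row (pred f) = row f"
  by (metis row_succ succ_pred)

lemma pos_pred [simp]: "pos (pred f) = pos f - 1"
  by (metis add_diff_cancel_right' pos_succ succ_pred)

lemma adjacent_pred: "adjacent f (pred f)"
  by (metis adjacent_succ adjacent_sym succ_pred)

definition first_ends :: "face set \<Rightarrow> (face \<times> face) set" where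
  "first_ends P = {(f, pred f) | f. f \<in> P \<and> (\<forall>h\<in>P. row h = row f \<longrightarrow> pos f \<le> pos h)}"

definition last_ends :: "face set \<Rightarrow> (face \<times> face) set" where
  "last_ends P = {(f, succ f) | f. f \<in> P \<and> (\<forall>h\<in>P. row h = row f \<longrightarrow> pos h \<le> pos f)}"

definition row_ends :: "face set \<Rightarrow> (face \<times> face) set" where
  "row_ends P = first_ends P \<union> last_ends P"

lemma row_ends_subset_boundary_pairs: "row_ends P \<subseteq> boundary_pairs P"
proof
  fix e assume "e \<in> row_ends P"
  then obtain f where "f \<in> P"
    and "e = (f, pred f) \<and> (\<forall>h\<in>P. row h = row f \<longrightarrow> pos f \<le> pos h) \<or>
         e = (f, succ f) \<and> (\<forall>h\<in>P. row h = row f \<longrightarrow> pos h \<le> pos f)"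
    unfolding row_ends_def first_ends_def last_ends_def by blast
  then show "e \<in> boundary_pairs P"
    unfolding boundary_pairs_def using adjacent_pred adjacent_succ by fastforce
qed

lemma card_first_ends:
  assumes "finite P"
  shows "card (first_ends P) = card (row ` P)"
proof -
  let ?M = "{f\<in>P. \<forall>h\<in>P. row h = row f \<longrightarrow> pos f \<le> pos h}"
  have "first_ends P = (\<lambda>f. (f, pred f)) ` ?M"
    unfolding first_ends_def by auto
  then have "card (first_ends P) = card ?M"
    by (simp add: card_image inj_on_def)
  also have "\<dots> = card (row ` ?M)"
  proof (rule card_image[symmetric], rule inj_onI)
    fix f g assume "f \<in> ?M" "g \<in> ?M" "row f = row g"
    then have "pos f = pos g" by (simp add: order_antisym)
    with \<open>row f = row g\<close> show "f = g" by (rule row_pos_inj)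
  qed
  also have "row ` ?M = row ` P"
  proof (intro equalityI subsetI)
    fix k assume "k \<in> row ` P"
    then have fin: "finite (pos ` {h\<in>P. row h = k})" and ne: "pos ` {h\<in>P. row h = k} \<noteq> {}"
      using assms by auto
    obtain f where "f \<in> P" "row f = k" "pos f = Min (pos ` {h\<in>P. row h = k})"
      using Min_in[OF fin ne] by auto
    with Min_le[OF fin] show "k \<in> row ` ?M" by auto
  qed auto
  finally show ?thesis .
qed

lemma card_last_ends:
  assumes "finite P"
  shows "card (last_ends P) = card (row ` P)"
proof -
  let ?M = "{f\<in>P. \<forall>h\<in>P. row h = row f \<longrightarrow> pos h \<le> pos f}"
  have "last_ends P = (\<lambda>f. (f, succ f)) ` ?M"
    unfolding last_ends_def by auto
  then have "card (last_ends P) = card ?M"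
    by (simp add: card_image inj_on_def)
  also have "\<dots> = card (row ` ?M)"
  proof (rule card_image[symmetric], rule inj_onI)
    fix f g assume "f \<in> ?M" "g \<in> ?M" "row f = row g"
    then have "pos f = pos g" by (simp add: order_antisym)
    with \<open>row f = row g\<close> show "f = g" by (rule row_pos_inj)
  qed
  also have "row ` ?M = row ` P"
  proof (intro equalityI subsetI)
    fix k assume "k \<in> row ` P"
    then have fin: "finite (pos ` {h\<in>P. row h = k})" and ne: "pos ` {h\<in>P. row h = k} \<noteq> {}"
      using assms by auto
    obtain f where "f \<in> P" "row f = k" "pos f = Max (pos ` {h\<in>P. row h = k})"
      using Max_in[OF fin ne] by auto
    with Max_ge[OF fin] show "k \<in> row ` ?M" by auto
  qed auto
  finally show ?thesis .
qed

lemma first_ends_last_ends_disjoint: "first_ends P \<inter> last_ends P = {}"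
  unfolding first_ends_def last_ends_def by (auto dest: arg_cong[where f = pos])

lemma card_row_ends: "finite P \<Longrightarrow> card (row_ends P) = 2 * card (row ` P)"
proof -
  assume "finite P"
  then have "finite (row_ends P)"
    using row_ends_subset_boundary_pairs finite_boundary_pairs finite_subset by blast
  then have "finite (first_ends P)" "finite (last_ends P)"
    unfolding row_ends_def by simp_all
  with \<open>finite P\<close> show ?thesis
    unfolding row_ends_def
    by (simp add: card_Un_disjoint first_ends_last_ends_disjoint card_first_ends card_last_ends)
qed

lemma row_end_site_neighbours:
  assumes "(f, g) \<in> row_ends P"
  shows "pred g \<in> P \<and> succ g \<notin> P \<and> f = pred g \<or> succ g \<in> P \<and> pred g \<notin> P \<and> f = succ g"
  using assms unfolding row_ends_def
proof
  assume "(f, g) \<in> first_ends P"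
  then have "f \<in> P" "g = pred f" and min: "\<forall>h\<in>P. row h = row f \<longrightarrow> pos f \<le> pos h"
    unfolding first_ends_def by auto
  moreover have "pred g \<notin> P"
  proof
    assume "pred g \<in> P"
    from min[rule_format, OF this] \<open>g = pred f\<close> show False by simp
  qed
  ultimately show ?thesis by simp
next
  assume "(f, g) \<in> last_ends P"
  then have "f \<in> P" "g = succ f" and max: "\<forall>h\<in>P. row h = row f \<longrightarrow> pos h \<le> pos f"
    unfolding last_ends_def by auto
  moreover have "succ g \<notin> P"
  proof
    assume "succ g \<in> P"
    from max[rule_format, OF this] \<open>g = succ f\<close> show False by simp
  qed
  ultimately show ?thesis by simp
qed

lemma row_ends_same_row: "(f, g) \<in> row_ends P \<Longrightarrow> row g = row f"
  unfolding row_ends_def first_ends_def last_ends_def by auto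

lemma row_end_sites_subset_boundary_sites: "snd ` row_ends P \<subseteq> boundary_sites P"
  using row_ends_subset_boundary_pairs unfolding boundary_pairs_def boundary_sites_def by force

lemma row_end_site_one_neighbour: "g \<in> snd ` row_ends P \<Longrightarrow> (pred g \<in> P) \<noteq> (succ g \<in> P)"
  using row_end_site_neighbours by force

lemma card_row_end_sites: "finite P \<Longrightarrow> card (snd ` row_ends P) = 2 * card (row ` P)"
proof -
  assume "finite P"
  have "inj_on snd (row_ends P)"
  proof (rule inj_onI)
    fix e e' assume "e \<in> row_ends P" "e' \<in> row_ends P" "snd e = snd e'"
    moreover obtain f g f' g' where "e = (f, g)" "e' = (f', g')"
      by (cases e, cases e')
    ultimately show "e = e'"
      using row_end_site_neighbours[of f g P] row_end_site_neighbours[of f' g' P] by auto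
  qed
  then show ?thesis
    by (simp add: card_image card_row_ends[OF \<open>finite P\<close>])
qed

definition row_convex :: "face set \<Rightarrow> bool" where
  "row_convex R \<longleftrightarrow> (\<forall>f g h. f \<in> R \<longrightarrow> h \<in> R \<longrightarrow> row g = row f \<longrightarrow> row h = row f \<longrightarrow>
     pos f \<le> pos g \<longrightarrow> pos g \<le> pos h \<longrightarrow> g \<in> R)"

lemma row_convex_boundary_pair:
  assumes "row_convex R" "(f, g) \<in> boundary_pairs R" "row g = row f"
  shows "(f, g) \<in> row_ends R"
proof -
  have "f \<in> R" "g \<notin> R" "adjacent f g"
    using assms(2) unfolding boundary_pairs_def by auto
  have between: "b \<in> R" if "a \<in> R" "c \<in> R" "row b = row a" "row c = row a"
    "pos a \<le> pos b" "pos b \<le> pos c" for a b c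
    using assms(1) that unfolding row_convex_def by blast
  from adjacent_same_row[OF \<open>adjacent f g\<close> assms(3)] show ?thesis
  proof
    assume g: "g = pred f"
    have "pos f \<le> pos h" if "h \<in> R" "row h = row f" for h
    proof (rule ccontr)
      assume "\<not> pos f \<le> pos h"
      with that g \<open>f \<in> R\<close> have "g \<in> R"
        by - (rule between[where a = h and c = f], simp_all)
      with \<open>g \<notin> R\<close> show False ..
    qed
    with g \<open>f \<in> R\<close> show ?thesis unfolding row_ends_def first_ends_def by blast
  next
    assume g: "g = succ f"
    have "pos h \<le> pos f" if "h \<in> R" "row h = row f" for h
    proof (rule ccontr)
      assume "\<not> pos h \<le> pos f"
      with that g \<open>f \<in> R\<close> have "g \<in> R"
        by - (rule between[where a = f and c = h], simp_all)
      with \<open>g \<notin> R\<close> show False ..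
    qed
    with g \<open>f \<in> R\<close> show ?thesis unfolding row_ends_def last_ends_def by blast
  qed
qed

definition row_monotone :: "(face \<Rightarrow> int) \<Rightarrow> bool" where
  "row_monotone c \<longleftrightarrow> (\<forall>f g. row f = row g \<longrightarrow> pos f \<le> pos g \<longrightarrow> c f \<le> c g)"

lemma row_monotone_row: "row_monotone row"
  unfolding row_monotone_def by simp

lemma row_convex_Int: "row_convex A \<Longrightarrow> row_convex B \<Longrightarrow> row_convex (A \<inter> B)"
  unfolding row_convex_def by blast

lemma row_convex_interval:
  assumes "row_monotone c \<or> row_monotone (\<lambda>f. - c f)"
  shows "row_convex {f. lo \<le> c f \<and> c f \<le> hi}"
  unfolding row_convex_def
proof (intro allI impI)
  fix f g h assume "f \<in> {f. lo \<le> c f \<and> c f \<le> hi}" "h \<in> {f. lo \<le> c f \<and> c f \<le> hi}"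
    and "row g = row f" "row h = row f" "pos f \<le> pos g" "pos g \<le> pos h"
  moreover from assms this(3-) have "c f \<le> c g \<and> c g \<le> c h \<or> c h \<le> c g \<and> c g \<le> c f"
    unfolding row_monotone_def by (metis neg_le_iff_le)
  ultimately show "g \<in> {f. lo \<le> c f \<and> c f \<le> hi}" by auto
qed

end

fun x_succ :: "face \<Rightarrow> face" where
  "x_succ ((x, y), u) = (if u then ((x, y), False) else ((x, y + 1), True))"
fun x_pred :: "face \<Rightarrow> face" where
  "x_pred ((x, y), u) = (if u then ((x, y - 1), False) else ((x, y), True))"
fun y_succ :: "face \<Rightarrow> face" where
  "y_succ ((x, y), u) = (if u then ((x, y), False) else ((x + 1, y), True))"
fun y_pred :: "face \<Rightarrow> face" where
  "y_pred ((x, y), u) = (if u then ((x - 1, y), False) else ((x, y), True))"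
fun z_succ :: "face \<Rightarrow> face" where
  "z_succ ((x, y), u) = (if u then ((x, y - 1), False) else ((x + 1, y), True))"
fun z_pred :: "face \<Rightarrow> face" where
  "z_pred ((x, y), u) = (if u then ((x - 1, y), False) else ((x, y + 1), True))"

definition x_pos :: "face \<Rightarrow> int" where "x_pos f = row_y f + row_z f"
definition y_pos :: "face \<Rightarrow> int" where "y_pos f = row_x f + row_z f"
definition z_pos :: "face \<Rightarrow> int" where "z_pos f = row_x f - row_y f"

interpretation rx: lattice_rows row_x x_pos x_succ x_pred
proof
  fix f g :: face
  obtain x y u x' y' u' where f: "f = ((x, y), u)" and g: "g = ((x', y'), u')"
    by (metis prod.collapse)
  show "row_x (x_succ f) = row_x f" "x_pos (x_succ f) = x_pos f + 1"
    "x_pred (x_succ f) = f" "x_succ (x_pred f) = f" "adjacent f (x_succ f)"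
    unfolding f x_pos_def by (cases u; simp add: adjacent_iff)+
  show "row_x f = row_x g \<Longrightarrow> x_pos f = x_pos g \<Longrightarrow> f = g"
    unfolding f g x_pos_def by (cases u; cases u'; simp; presburger)
  show "adjacent f g \<Longrightarrow> row_x g = row_x f \<Longrightarrow> g = x_pred f \<or> g = x_succ f"
    unfolding f g by (cases u; cases u') (auto simp: adjacent_iff)
qed

interpretation ry: lattice_rows row_y y_pos y_succ y_pred
proof
  fix f g :: face
  obtain x y u x' y' u' where f: "f = ((x, y), u)" and g: "g = ((x', y'), u')"
    by (metis prod.collapse)
  show "row_y (y_succ f) = row_y f" "y_pos (y_succ f) = y_pos f + 1"
    "y_pred (y_succ f) = f" "y_succ (y_pred f) = f" "adjacent f (y_succ f)"
    unfolding f y_pos_def by (cases u; simp add: adjacent_iff)+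
  show "row_y f = row_y g \<Longrightarrow> y_pos f = y_pos g \<Longrightarrow> f = g"
    unfolding f g y_pos_def by (cases u; cases u'; simp; presburger)
  show "adjacent f g \<Longrightarrow> row_y g = row_y f \<Longrightarrow> g = y_pred f \<or> g = y_succ f"
    unfolding f g by (cases u; cases u') (auto simp: adjacent_iff)
qed

interpretation rz: lattice_rows row_z z_pos z_succ z_pred
proof
  fix f g :: face
  obtain x y u x' y' u' where f: "f = ((x, y), u)" and g: "g = ((x', y'), u')"
    by (metis prod.collapse)
  show "row_z (z_succ f) = row_z f" "z_pos (z_succ f) = z_pos f + 1"
    "z_pred (z_succ f) = f" "z_succ (z_pred f) = f" "adjacent f (z_succ f)"
    unfolding f z_pos_def by (cases u; simp add: adjacent_iff)+
  show "row_z f = row_z g \<Longrightarrow> z_pos f = z_pos g \<Longrightarrow> f = g"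
    unfolding f g z_pos_def by (cases u; cases u'; simp; presburger)
  show "adjacent f g \<Longrightarrow> row_z g = row_z f \<Longrightarrow> g = z_pred f \<or> g = z_succ f"
    unfolding f g by (cases u; cases u') (auto simp: adjacent_iff)
qed

section \<open>Rows and perimeters\<close>

lemma card_add3:
  assumes "finite A" "finite B" "finite C"
  shows "card A + card B + card C = card (A \<union> B) + card ((A \<inter> B) \<union> C) + card (A \<inter> B \<inter> C)"
  using assms by (simp add: card_Un_Int[of A B] card_Un_Int[of "A \<inter> B" C])

lemma card_add3_le_double:
  assumes "finite U" "A \<subseteq> U" "B \<subseteq> U" "C \<subseteq> U" "A \<inter> B \<inter> C = {}"
  shows "card A + card B + card C \<le> 2 * card U"
proof -
  have "finite A" "finite B" "finite C" using assms finite_subset by blast+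
  then have "card A + card B + card C = card (A \<union> B) + card ((A \<inter> B) \<union> C)"
    using card_add3[of A B C] assms(5) by simp
  moreover have "card (A \<union> B) \<le> card U" "card ((A \<inter> B) \<union> C) \<le> card U"
    using assms by (auto intro: card_mono)
  ultimately show ?thesis by linarith
qed

lemma double_card_le_card_add3:
  assumes "finite U" "A \<subseteq> U" "B \<subseteq> U" "C \<subseteq> U" "U \<subseteq> (A \<inter> B) \<union> (A \<inter> C) \<union> (B \<inter> C)"
  shows "2 * card U \<le> card A + card B + card C"
proof -
  have "finite A" "finite B" "finite C" using assms finite_subset by blast+
  then have "card A + card B + card C \<ge> card (A \<union> B) + card ((A \<inter> B) \<union> C)"
    using card_add3[of A B C] by linarith
  moreover have "card U \<le> card (A \<union> B)" "card U \<le> card ((A \<inter> B) \<union> C)"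
    using assms \<open>finite A\<close> \<open>finite B\<close> \<open>finite C\<close> by (auto intro!: card_mono)
  ultimately show ?thesis by linarith
qed

definition row_count :: "face set \<Rightarrow> nat" where
  "row_count P = card (row_x ` P) + card (row_y ` P) + card (row_z ` P)"

text \<open>Every row of \<open>P\<close> has two ends, and a boundary pair is an end of rows in at most two
  of the three directions, since its two faces share at most two row indices.\<close>

lemma row_count_le_edge_perimeter:
  assumes "finite P"
  shows "row_count P \<le> edge_perimeter P"
proof -
  have "rx.row_ends P \<inter> ry.row_ends P \<inter> rz.row_ends P = {}"
  proof (rule ccontr)
    assume "rx.row_ends P \<inter> ry.row_ends P \<inter> rz.row_ends P \<noteq> {}"
    then obtain f g where fg: "(f, g) \<in> rx.row_ends P" "(f, g) \<in> ry.row_ends P" "(f, g) \<in> rz.row_ends P"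
      by auto
    then have "g = f"
      by (simp add: face_eq_iff_rows rx.row_ends_same_row ry.row_ends_same_row rz.row_ends_same_row)
    moreover have "(f, g) \<in> boundary_pairs P"
      using fg(1) rx.row_ends_subset_boundary_pairs by blast
    ultimately show False unfolding boundary_pairs_def by auto
  qed
  then have "2 * row_count P \<le> 2 * card (boundary_pairs P)"
    using card_add3_le_double[OF finite_boundary_pairs[OF assms] rx.row_ends_subset_boundary_pairs
        ry.row_ends_subset_boundary_pairs rz.row_ends_subset_boundary_pairs]
    by (simp add: row_count_def rx.card_row_ends ry.card_row_ends rz.card_row_ends assms)
  then show ?thesis by (simp add: edge_perimeter_eq_card)
qed

text \<open>The six row neighbours of a face are its three edge neighbours, each met in two directions,
  so the numbers of row neighbours in \<open>P\<close> in the three directions have an even sum.\<close>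

lemma row_neighbours_not_all_one:
  "\<not> ((x_pred g \<in> P) \<noteq> (x_succ g \<in> P) \<and> (y_pred g \<in> P) \<noteq> (y_succ g \<in> P) \<and>
      (z_pred g \<in> P) \<noteq> (z_succ g \<in> P))"
proof -
  obtain x y u where g: "g = ((x, y), u)" by (metis prod.collapse)
  show ?thesis unfolding g by (cases u) auto
qed

lemma row_count_le_site_perimeter:
  assumes "finite P"
  shows "row_count P \<le> site_perimeter P"
proof -
  have "snd ` rx.row_ends P \<inter> snd ` ry.row_ends P \<inter> snd ` rz.row_ends P = {}"
    using rx.row_end_site_one_neighbour ry.row_end_site_one_neighbour
      rz.row_end_site_one_neighbour row_neighbours_not_all_one by blast
  then have "2 * row_count P \<le> 2 * card (boundary_sites P)"
    using card_add3_le_double[OF finite_boundary_sites[OF assms] rx.row_end_sites_subset_boundary_sites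
        ry.row_end_sites_subset_boundary_sites rz.row_end_sites_subset_boundary_sites]
    by (simp add: row_count_def rx.card_row_end_sites ry.card_row_end_sites rz.card_row_end_sites assms)
  then show ?thesis by (simp add: site_perimeter_eq_card)
qed

definition coord_box :: "int \<Rightarrow> int \<Rightarrow> int \<Rightarrow> int \<Rightarrow> int \<Rightarrow> int \<Rightarrow> face set" where
  "coord_box x0 x1 y0 y1 z0 z1 =
     {f. x0 \<le> row_x f \<and> row_x f \<le> x1} \<inter> {f. y0 \<le> row_y f \<and> row_y f \<le> y1} \<inter>
     {f. z0 \<le> row_z f \<and> row_z f \<le> z1}"

lemma rows_monotone:
  "rx.row_monotone row_y" "rx.row_monotone row_z" "ry.row_monotone row_x"
  "ry.row_monotone row_z" "rz.row_monotone row_x" "rz.row_monotone (\<lambda>f. - row_y f)"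
  unfolding rx.row_monotone_def ry.row_monotone_def rz.row_monotone_def x_pos_def y_pos_def z_pos_def
  by (auto simp: row_x_def row_y_def row_z_def; presburger)+

lemma row_convex_coord_box:
  "rx.row_convex (coord_box x0 x1 y0 y1 z0 z1)" "ry.row_convex (coord_box x0 x1 y0 y1 z0 z1)"
  "rz.row_convex (coord_box x0 x1 y0 y1 z0 z1)"
  unfolding coord_box_def
  by (intro rx.row_convex_Int ry.row_convex_Int rz.row_convex_Int rx.row_convex_interval
      ry.row_convex_interval rz.row_convex_interval;
      simp add: rows_monotone rx.row_monotone_row ry.row_monotone_row rz.row_monotone_row)+

text \<open>A box meets every row in an interval, so a boundary pair of a box, whose faces share two row
  indices, is an end of rows in two directions.\<close>

lemma boundary_pair_row_ends:
  assumes "(f, g) \<in> boundary_pairs (coord_box x0 x1 y0 y1 z0 z1)" (is "_ \<in> boundary_pairs ?R")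
  shows "(f, g) \<in> rx.row_ends ?R \<inter> ry.row_ends ?R \<or> (f, g) \<in> rx.row_ends ?R \<inter> rz.row_ends ?R \<or>
    (f, g) \<in> ry.row_ends ?R \<inter> rz.row_ends ?R"
proof -
  have "adjacent f g" using assms unfolding boundary_pairs_def by simp
  then have "row_x g = row_x f \<and> row_y g = row_y f \<or> row_x g = row_x f \<and> row_z g = row_z f \<or>
      row_y g = row_y f \<and> row_z g = row_z f"
    unfolding adjacent_iff_rows by auto
  then show ?thesis
    using rx.row_convex_boundary_pair[OF row_convex_coord_box(1) assms]
      ry.row_convex_boundary_pair[OF row_convex_coord_box(2) assms]
      rz.row_convex_boundary_pair[OF row_convex_coord_box(3) assms]
    by blast
qed

lemma finite_coord_box: "finite (coord_box x0 x1 y0 y1 z0 z1)"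
  by (rule finite_subset[of _ "({x0..x1} \<times> {y0..y1}) \<times> UNIV"])
    (auto simp: coord_box_def row_x_def row_y_def)

lemma edge_perimeter_coord_box:
  "edge_perimeter (coord_box x0 x1 y0 y1 z0 z1) \<le> row_count (coord_box x0 x1 y0 y1 z0 z1)"
  (is "edge_perimeter ?R \<le> _")
proof -
  have "2 * card (boundary_pairs ?R) \<le> 2 * row_count ?R"
    using double_card_le_card_add3[OF finite_boundary_pairs[OF finite_coord_box]
        rx.row_ends_subset_boundary_pairs ry.row_ends_subset_boundary_pairs
        rz.row_ends_subset_boundary_pairs] boundary_pair_row_ends
    by (simp add: subset_iff row_count_def rx.card_row_ends ry.card_row_ends rz.card_row_ends
        finite_coord_box)
  then show ?thesis by (simp add: edge_perimeter_eq_card)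
qed

lemma site_perimeter_coord_box:
  "site_perimeter (coord_box x0 x1 y0 y1 z0 z1) \<le> row_count (coord_box x0 x1 y0 y1 z0 z1)"
  (is "site_perimeter ?R \<le> _")
proof -
  have "g \<in> (snd ` rx.row_ends ?R \<inter> snd ` ry.row_ends ?R) \<union> (snd ` rx.row_ends ?R \<inter> snd ` rz.row_ends ?R)
      \<union> (snd ` ry.row_ends ?R \<inter> snd ` rz.row_ends ?R)" if site: "g \<in> boundary_sites ?R" for g
  proof -
    obtain f where "(f, g) \<in> boundary_pairs ?R"
      using site unfolding boundary_sites_def boundary_pairs_def by blast
    from boundary_pair_row_ends[OF this] show ?thesis by (auto intro: rev_image_eqI)
  qed
  then have "2 * card (boundary_sites ?R) \<le> 2 * row_count ?R"
    using double_card_le_card_add3[OF finite_boundary_sites[OF finite_coord_box]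
        rx.row_end_sites_subset_boundary_sites ry.row_end_sites_subset_boundary_sites
        rz.row_end_sites_subset_boundary_sites]
    by (simp add: subset_iff row_count_def rx.card_row_end_sites ry.card_row_end_sites
        rz.card_row_end_sites finite_coord_box)
  then show ?thesis by (simp add: site_perimeter_eq_card)
qed

section \<open>Hexagons\<close>

definition triangle :: "int \<Rightarrow> int \<Rightarrow> int \<Rightarrow> face set" where
  "triangle s t n = {f. s \<le> row_x f \<and> t \<le> row_y f \<and> row_z f < s + t + n}"

lemma card_triangle_layer:
  assumes "0 \<le> m"
  shows "card {f. s \<le> row_x f \<and> t \<le> row_y f \<and> row_z f = s + t + m} = nat (2 * m + 1)"
proof -
  let ?up = "(\<lambda>i. ((s + i, t + m - i), True)) ` {0..m}"
  let ?down = "(\<lambda>i. ((s + i, t + m - 1 - i), False)) ` {0..m - 1}"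
  have "{f. s \<le> row_x f \<and> t \<le> row_y f \<and> row_z f = s + t + m} = ?up \<union> ?down"
  proof (intro equalityI subsetI)
    fix f assume "f \<in> {f. s \<le> row_x f \<and> t \<le> row_y f \<and> row_z f = s + t + m}"
    moreover obtain x y u where "f = ((x, y), u)" by (metis prod.collapse)
    ultimately show "f \<in> ?up \<union> ?down"
      by (cases u) (auto simp: image_iff intro!: bexI[of _ "x - s"])
  qed auto
  moreover have "?up \<inter> ?down = {}" by auto
  moreover have "card ?up = nat (m + 1)" "card ?down = nat m"
    by (subst card_image; auto simp: inj_on_def)+
  ultimately show ?thesis
    using assms by (simp add: card_Un_disjoint)
qed

lemma finite_triangle: "finite (triangle s t n)"
proof -
  have "f \<in> coord_box s (s + n) t (t + n) (s + t) (s + t + n)" if "f \<in> triangle s t n" for f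
    using that row_z_bounds[of f] unfolding triangle_def coord_box_def by auto
  then have "triangle s t n \<subseteq> coord_box s (s + n) t (t + n) (s + t) (s + t + n)" ..
  then show ?thesis using finite_coord_box finite_subset by blast
qed

lemma card_triangle: "0 \<le> n \<Longrightarrow> int (card (triangle s t n)) = n * n"
proof (induction n rule: int_ge_induct)
  case base
  have "triangle s t 0 = {}"
    unfolding triangle_def using row_z_bounds(1) by (auto simp: not_less)
  then show ?case by simp
next
  case (step n)
  let ?layer = "{f. s \<le> row_x f \<and> t \<le> row_y f \<and> row_z f = s + t + n}"
  have "triangle s t (n + 1) = triangle s t n \<union> ?layer" "triangle s t n \<inter> ?layer = {}"
    unfolding triangle_def by auto
  moreover have "finite ?layer"
    by (rule finite_subset[OF _ finite_triangle[of s t "n + 1"]]) (auto simp: triangle_def)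
  ultimately show ?case
    using step card_triangle_layer[of n s t] finite_triangle[of s t n]
    by (simp add: card_Un_disjoint algebra_simps)
qed

definition hexagon :: "int \<Rightarrow> int \<Rightarrow> int \<Rightarrow> int \<Rightarrow> face set" where
  "hexagon d a b c = coord_box 0 (d - b - 1) 0 (d - c - 1) a (d - 1)"

lemma T_hex_eq_hexagon: "T_hex d a b c = hexagon (int d) (int a) (int b) (int c)"
proof -
  have "f \<in> T_hex d a b c \<longleftrightarrow> f \<in> hexagon (int d) (int a) (int b) (int c)" for f
  proof -
    obtain x y u where "f = ((x, y), u)" by (metis prod.collapse)
    then show ?thesis
      unfolding T_hex_def hexagon_def coord_box_def in_hex_region_def by (cases u) (auto simp: Let_def)
  qed
  then show ?thesis by blast
qed

lemma card_hexagon: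
  assumes "0 \<le> a" "0 \<le> b" "0 \<le> c" "a + b \<le> d" "b + c \<le> d" "c + a \<le> d"
  shows "int (card (hexagon d a b c)) = d * d - a * a - b * b - c * c"
proof -
  let ?A = "triangle 0 0 a" and ?B = "triangle (d - b) 0 b" and ?C = "triangle 0 (d - c) c"
  have hex_iff: "f \<in> hexagon d a b c \<longleftrightarrow> f \<in> triangle 0 0 d - (?A \<union> ?B \<union> ?C)"
    and corner: "f \<in> ?A \<union> ?B \<union> ?C \<Longrightarrow> f \<in> triangle 0 0 d"
    and disj_iff: "f \<notin> ?A \<inter> ?B" "f \<notin> (?A \<union> ?B) \<inter> ?C" for f
    using assms row_z_bounds[of f] unfolding hexagon_def coord_box_def triangle_def by auto
  have hex: "hexagon d a b c = triangle 0 0 d - (?A \<union> ?B \<union> ?C)"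
    using hex_iff by blast
  have corners: "?A \<union> ?B \<union> ?C \<subseteq> triangle 0 0 d"
    using corner by blast
  have disj: "?A \<inter> ?B = {}" "(?A \<union> ?B) \<inter> ?C = {}"
    using disj_iff by blast+
  have "card (?A \<union> ?B \<union> ?C) = card ?A + card ?B + card ?C"
    using disj by (simp add: card_Un_disjoint finite_triangle)
  moreover have "card (hexagon d a b c) = card (triangle 0 0 d) - card (?A \<union> ?B \<union> ?C)"
    unfolding hex by (rule card_Diff_subset[OF _ corners]) (simp add: finite_triangle)
  moreover have "card (?A \<union> ?B \<union> ?C) \<le> card (triangle 0 0 d)"
    by (rule card_mono[OF finite_triangle corners])
  ultimately show ?thesis
    using assms by (simp add: of_nat_diff card_triangle)
qed

lemma row_count_hexagon:
  assumes "0 \<le> a" "0 \<le> b" "0 \<le> c" "a + b \<le> d" "b + c \<le> d" "c + a \<le> d"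
  shows "int (row_count (hexagon d a b c)) \<le> 3 * d - a - b - c"
proof -
  have "row_x ` hexagon d a b c \<subseteq> {0..d - b - 1}" "row_y ` hexagon d a b c \<subseteq> {0..d - c - 1}"
    "row_z ` hexagon d a b c \<subseteq> {a..d - 1}"
    unfolding hexagon_def coord_box_def by auto
  then have "card (row_x ` hexagon d a b c) \<le> nat (d - b)" "card (row_y ` hexagon d a b c) \<le> nat (d - c)"
    "card (row_z ` hexagon d a b c) \<le> nat (d - a)"
    by (auto dest!: card_mono[rotated])
  then show ?thesis
    using assms unfolding row_count_def by linarith
qed

section \<open>Lattice symmetries\<close>

fun face_shift :: "int \<times> int \<Rightarrow> face \<Rightarrow> face" where
  "face_shift (s, t) ((x, y), u) = ((x + s, y + t), u)"

fun face_rot :: "face \<Rightarrow> face" where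
  "face_rot ((x, y), True) = ((- y - 1, x + y), False)"
| "face_rot ((x, y), False) = ((- y - 1, x + y + 1), True)"

fun face_rot_inv :: "face \<Rightarrow> face" where
  "face_rot_inv ((x, y), True) = ((x + y, - x - 1), False)"
| "face_rot_inv ((x, y), False) = ((x + y + 1, - x - 1), True)"

fun face_refl :: "face \<Rightarrow> face" where
  "face_refl ((x, y), u) = ((y, x), u)"

lemma rows_face_shift [simp]:
  "row_x (face_shift (s, t) f) = row_x f + s" "row_y (face_shift (s, t) f) = row_y f + t"
  "row_z (face_shift (s, t) f) = row_z f + s + t"
proof -
  obtain x y u where f: "f = ((x, y), u)" by (metis prod.collapse)
  show "row_x (face_shift (s, t) f) = row_x f + s" "row_y (face_shift (s, t) f) = row_y f + t"
    "row_z (face_shift (s, t) f) = row_z f + s + t"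
    unfolding f by simp_all
qed

lemma rows_face_rot [simp]:
  "row_x (face_rot f) = - row_y f - 1" "row_y (face_rot f) = row_z f" "row_z (face_rot f) = row_x f"
proof -
  obtain x y u where f: "f = ((x, y), u)" by (metis prod.collapse)
  show "row_x (face_rot f) = - row_y f - 1" "row_y (face_rot f) = row_z f" "row_z (face_rot f) = row_x f"
    unfolding f by (cases u; simp)+
qed

lemma rows_face_rot_inv [simp]:
  "row_x (face_rot_inv f) = row_z f" "row_y (face_rot_inv f) = - row_x f - 1"
  "row_z (face_rot_inv f) = row_y f"
proof -
  obtain x y u where f: "f = ((x, y), u)" by (metis prod.collapse)
  show "row_x (face_rot_inv f) = row_z f" "row_y (face_rot_inv f) = - row_x f - 1"
    "row_z (face_rot_inv f) = row_y f"
    unfolding f by (cases u; simp)+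
qed

lemma rows_face_refl [simp]:
  "row_x (face_refl f) = row_y f" "row_y (face_refl f) = row_x f" "row_z (face_refl f) = row_z f"
proof -
  obtain x y u where f: "f = ((x, y), u)" by (metis prod.collapse)
  show "row_x (face_refl f) = row_y f" "row_y (face_refl f) = row_x f" "row_z (face_refl f) = row_z f"
    unfolding f by simp_all
qed

lemma face_shift_inverse [simp]: "face_shift (- s, - t) (face_shift (s, t) f) = f"
  by (subst face_eq_iff_rows) simp

lemma face_rot_inverse [simp]: "face_rot_inv (face_rot f) = f" "face_rot (face_rot_inv f) = f"
  by (subst face_eq_iff_rows, simp)+

lemma face_refl_involution [simp]: "face_refl (face_refl f) = f"
  by (subst face_eq_iff_rows) simp

lemma image_eq_by_inverse:
  assumes "\<And>x. g (f x) = x" "\<And>y. f (g y) = y" "\<And>x. f x \<in> B \<longleftrightarrow> x \<in> A"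
  shows "f ` A = B"
proof (intro equalityI subsetI)
  fix y assume "y \<in> B"
  then have "f (g y) \<in> B" by (simp only: assms(2))
  then have "f (g y) \<in> f ` A" using assms(3) by blast
  then show "y \<in> f ` A" by (simp only: assms(2))
next
  fix y assume "y \<in> f ` A"
  then obtain x where "x \<in> A" "y = f x" by blast
  with assms(3) show "y \<in> B" by simp
qed

lemma face_shift_coord_box:
  "face_shift (s, t) ` coord_box x0 x1 y0 y1 z0 z1 =
     coord_box (x0 + s) (x1 + s) (y0 + t) (y1 + t) (z0 + s + t) (z1 + s + t)"
  using face_shift_inverse[of "- s" "- t"]
  by (intro image_eq_by_inverse[where g = "face_shift (- s, - t)"]) (auto simp: coord_box_def)

lemma face_rot_coord_box:
  "face_rot ` coord_box x0 x1 y0 y1 z0 z1 = coord_box (- y1 - 1) (- y0 - 1) z0 z1 x0 x1"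
  by (rule image_eq_by_inverse[where g = face_rot_inv]) (auto simp: coord_box_def)

lemma face_refl_coord_box: "face_refl ` coord_box x0 x1 y0 y1 z0 z1 = coord_box y0 y1 x0 x1 z0 z1"
  by (rule image_eq_by_inverse[where g = face_refl]) (auto simp: coord_box_def)

lemma verts_inj:
  assumes "verts f = verts g"
  shows "f = g"
proof -
  obtain x y u where f: "f = ((x, y), u)" by (metis prod.collapse)
  let ?f' = "((x, y), \<not> u)"
  have "adjacent f ?f'" "card (verts f) = 3"
    unfolding f by (cases u; simp add: adjacent_iff card_insert_if)+
  then have "verts f \<noteq> verts ?f'"
    unfolding adjacent_def by auto
  moreover have "g = f \<or> g = ?f'"
    using edge_faces[OF \<open>adjacent f ?f'\<close>, of g] assms by blast
  ultimately show ?thesis using assms by auto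
qed

definition induces :: "(vertex \<Rightarrow> vertex) \<Rightarrow> (face \<Rightarrow> face) \<Rightarrow> bool" where
  "induces \<sigma> \<phi> \<longleftrightarrow> inj \<sigma> \<and> bij \<phi> \<and> (\<forall>f. \<sigma> ` verts f = verts (\<phi> f))"

lemma induces_verts: "induces \<sigma> \<phi> \<Longrightarrow> \<sigma> ` verts f = verts (\<phi> f)"
  unfolding induces_def by blast

lemma induces_face_image:
  assumes "induces \<sigma> \<phi>"
  shows "face_image \<sigma> P = \<phi> ` P"
proof -
  have "verts g = \<sigma> ` verts f \<longleftrightarrow> g = \<phi> f" for g f
    using assms verts_inj unfolding induces_def by metis
  then show ?thesis unfolding face_image_def by blast
qed

lemma induces_adjacent:
  assumes "induces \<sigma> \<phi>"
  shows "adjacent (\<phi> f) (\<phi> g) \<longleftrightarrow> adjacent f g"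
proof -
  have "inj \<sigma>" "\<sigma> ` verts f = verts (\<phi> f)" "\<sigma> ` verts g = verts (\<phi> g)"
    using assms unfolding induces_def by blast+
  then have "verts (\<phi> f) \<inter> verts (\<phi> g) = \<sigma> ` (verts f \<inter> verts g)"
    by (simp add: image_Int)
  then show ?thesis
    unfolding adjacent_def using \<open>inj \<sigma>\<close> by (simp add: card_image inj_on_subset)
qed

lemma induces_comp:
  assumes "induces \<sigma> \<phi>" "induces \<tau> \<psi>"
  shows "induces (\<sigma> \<circ> \<tau>) (\<phi> \<circ> \<psi>)"
  unfolding induces_def
proof (intro conjI allI)
  fix f
  have "(\<sigma> \<circ> \<tau>) ` verts f = \<sigma> ` verts (\<psi> f)"
    using induces_verts[OF assms(2), of f, symmetric] by (simp add: image_image)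
  also have "\<dots> = verts ((\<phi> \<circ> \<psi>) f)"
    using induces_verts[OF assms(1)] by simp
  finally show "(\<sigma> \<circ> \<tau>) ` verts f = verts ((\<phi> \<circ> \<psi>) f)" .
qed (use assms in \<open>auto simp: induces_def intro: inj_compose bij_comp\<close>)

lemma induces_shift: "induces (\<lambda>v. vadd v t) (face_shift t)"
proof -
  obtain s r where t: "t = (s, r)" by (cases t)
  have "bij (face_shift t)"
    unfolding t using face_shift_inverse[of s r] face_shift_inverse[of "- s" "- r"]
    by (intro o_bij[of "face_shift (- s, - r)"]) (auto simp: fun_eq_iff)
  moreover have "(\<lambda>v. vadd v t) ` verts f = verts (face_shift t f)" for f
  proof -
    obtain x y u where f: "f = ((x, y), u)" by (metis prod.collapse)
    show ?thesis unfolding f t by (cases u) (auto simp: vadd_def)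
  qed
  ultimately show ?thesis
    unfolding induces_def by (auto simp: vadd_def inj_def)
qed

lemma induces_rot: "induces rot60 face_rot"
proof -
  have "bij face_rot"
    by (intro o_bij[of face_rot_inv]) (auto simp: fun_eq_iff)
  moreover have "rot60 ` verts f = verts (face_rot f)" for f
  proof -
    obtain x y u where f: "f = ((x, y), u)" by (metis prod.collapse)
    show ?thesis unfolding f by (cases u) (auto simp: rot60_def)
  qed
  ultimately show ?thesis
    unfolding induces_def by (auto simp: rot60_def inj_def)
qed

lemma induces_refl: "induces refl face_refl"
proof -
  have "bij face_refl"
    by (intro o_bij[of face_refl]) (auto simp: fun_eq_iff)
  moreover have "refl ` verts f = verts (face_refl f)" for f
  proof -
    obtain x y u where f: "f = ((x, y), u)" by (metis prod.collapse)
    show ?thesis unfolding f by (cases u) (auto simp: refl_def)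
  qed
  ultimately show ?thesis
    unfolding induces_def by (auto simp: refl_def inj_def)
qed

lemma induces_rot_power: "induces (rot60 ^^ k) (face_rot ^^ k)"
proof (induction k)
  case 0
  show ?case unfolding induces_def by simp
next
  case (Suc k)
  show ?case
    using induces_comp[OF induces_rot Suc.IH] by (simp only: funpow.simps)
qed

lemma lattice_symmetry_induces:
  assumes "\<sigma> \<in> lattice_symmetries"
  obtains \<phi> where "induces \<sigma> \<phi>"
proof -
  obtain k t where "\<sigma> = (\<lambda>v. vadd v t) \<circ> (rot60 ^^ k) \<or> \<sigma> = (\<lambda>v. vadd v t) \<circ> (rot60 ^^ k) \<circ> refl"
    using assms unfolding lattice_symmetries_def comp_def by blast
  then show thesis
    using that induces_comp[OF induces_comp[OF induces_shift induces_rot_power] induces_refl]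
      induces_comp[OF induces_shift induces_rot_power] by blast
qed

lemma boundary_pairs_image:
  assumes "bij \<phi>" and adj: "\<And>f g. adjacent (\<phi> f) (\<phi> g) \<longleftrightarrow> adjacent f g"
  shows "boundary_pairs (\<phi> ` P) = map_prod \<phi> \<phi> ` boundary_pairs P"
proof (intro equalityI subsetI)
  have mem: "\<phi> f \<in> \<phi> ` P \<longleftrightarrow> f \<in> P" for f
    using assms(1) by (simp add: bij_is_inj inj_image_mem_iff)
  fix e
  show "e \<in> map_prod \<phi> \<phi> ` boundary_pairs P" if "e \<in> boundary_pairs (\<phi> ` P)"
  proof -
    obtain f g where "e = (\<phi> f, \<phi> g)"
      using bij_is_surj[OF assms(1)] by (metis prod.collapse surjD)
    with that show ?thesis
      unfolding boundary_pairs_def by (auto simp: mem adj)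
  qed
  show "e \<in> boundary_pairs (\<phi> ` P)" if "e \<in> map_prod \<phi> \<phi> ` boundary_pairs P"
  proof -
    from that obtain f g where "e = (\<phi> f, \<phi> g)" "(f, g) \<in> boundary_pairs P" by auto
    then show ?thesis unfolding boundary_pairs_def by (simp add: mem adj)
  qed
qed

lemma boundary_sites_image:
  assumes "bij \<phi>" and adj: "\<And>f g. adjacent (\<phi> f) (\<phi> g) \<longleftrightarrow> adjacent f g"
  shows "boundary_sites (\<phi> ` P) = \<phi> ` boundary_sites P"
proof (intro equalityI subsetI)
  have mem: "\<phi> f \<in> \<phi> ` P \<longleftrightarrow> f \<in> P" for f
    using assms(1) by (simp add: bij_is_inj inj_image_mem_iff)
  fix g'
  show "g' \<in> \<phi> ` boundary_sites P" if "g' \<in> boundary_sites (\<phi> ` P)"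
  proof -
    obtain g where "g' = \<phi> g"
      using bij_is_surj[OF assms(1)] by (metis surjD)
    with that show ?thesis
      unfolding boundary_sites_def by (auto simp: mem adj)
  qed
  show "g' \<in> boundary_sites (\<phi> ` P)" if "g' \<in> \<phi> ` boundary_sites P"
  proof -
    from that obtain g where "g' = \<phi> g" "g \<in> boundary_sites P" by auto
    then show ?thesis unfolding boundary_sites_def by (auto simp: mem adj)
  qed
qed

lemma induces_perimeters:
  assumes "induces \<sigma> \<phi>"
  shows "area (\<phi> ` P) = area P" "edge_perimeter (\<phi> ` P) = edge_perimeter P"
    "site_perimeter (\<phi> ` P) = site_perimeter P"
proof -
  have "bij \<phi>" using assms unfolding induces_def by blast
  then have "inj \<phi>" "inj (map_prod \<phi> \<phi>)"
    using map_prod_inj_on[of \<phi> UNIV \<phi> UNIV] by (simp_all add: bij_is_inj)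
  with boundary_pairs_image[OF \<open>bij \<phi>\<close> induces_adjacent[OF assms]]
    boundary_sites_image[OF \<open>bij \<phi>\<close> induces_adjacent[OF assms]]
  show "area (\<phi> ` P) = area P" "edge_perimeter (\<phi> ` P) = edge_perimeter P"
    "site_perimeter (\<phi> ` P) = site_perimeter P"
    unfolding area_def edge_perimeter_eq_card site_perimeter_eq_card
    by (simp_all add: card_image inj_on_subset)
qed

lemma rot60_power_mod: "rot60 ^^ k = rot60 ^^ (k mod 6)"
proof -
  have "rot60 ^^ 6 = id" by (rule ext) (simp add: rot60_def numeral_eq_Suc)
  then have "rot60 ^^ (6 * n) = id" for n
    by (simp add: funpow_mult[symmetric])
  then have "rot60 ^^ (k mod 6 + 6 * (k div 6)) = rot60 ^^ (k mod 6)"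
    by (simp only: funpow_add comp_id)
  then show ?thesis by simp
qed

lemma refl_rot60_power: "refl ((rot60 ^^ k) v) = (rot60 ^^ (5 * k)) (refl v)"
proof (induction k arbitrary: v)
  case (Suc k)
  have "refl (rot60 w) = (rot60 ^^ 5) (refl w)" for w
    by (simp add: rot60_def refl_def numeral_eq_Suc)
  then show ?case
    using Suc by (simp add: funpow_Suc_right funpow_add)
qed simp

lemma lattice_symmetries_iff:
  "\<sigma> \<in> lattice_symmetries \<longleftrightarrow> (\<exists>k b t. \<sigma> = (\<lambda>v. vadd ((rot60 ^^ k) (if b then refl v else v)) t))"
proof
  assume "\<sigma> \<in> lattice_symmetries"
  then obtain k t where
    "\<sigma> = (\<lambda>v. vadd ((rot60 ^^ k) (if False then refl v else v)) t) \<or>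
     \<sigma> = (\<lambda>v. vadd ((rot60 ^^ k) (if True then refl v else v)) t)"
    unfolding lattice_symmetries_def by auto
  then show "\<exists>k b t. \<sigma> = (\<lambda>v. vadd ((rot60 ^^ k) (if b then refl v else v)) t)"
    by blast
next
  assume "\<exists>k b t. \<sigma> = (\<lambda>v. vadd ((rot60 ^^ k) (if b then refl v else v)) t)"
  then obtain k b t where "\<sigma> = (\<lambda>v. vadd ((rot60 ^^ (k mod 6)) (if b then refl v else v)) t)"
    using rot60_power_mod by metis
  moreover have "k mod 6 < 6" by simp
  ultimately show "\<sigma> \<in> lattice_symmetries"
    unfolding lattice_symmetries_def by (cases b) (simp_all only: if_True if_False; blast)+
qed

lemma lattice_symmetries_closed:
  assumes "\<sigma> \<in> lattice_symmetries"
  shows "(\<lambda>v. vadd v s) \<circ> \<sigma> \<in> lattice_symmetries"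
    and "(\<lambda>v. vadd v s) \<circ> rot60 \<circ> \<sigma> \<in> lattice_symmetries"
    and "refl \<circ> \<sigma> \<in> lattice_symmetries"
proof -
  obtain k b t where \<sigma>: "\<sigma> = (\<lambda>v. vadd ((rot60 ^^ k) (if b then refl v else v)) t)"
    using assms unfolding lattice_symmetries_iff by blast
  have vadd_assoc: "vadd (vadd v t) s = vadd v (vadd t s)"
    and rot60_vadd: "rot60 (vadd v t) = vadd (rot60 v) (rot60 t)"
    and refl_vadd: "refl (vadd v t) = vadd (refl v) (refl t)"
    and refl_refl: "refl (refl v) = v" for v t s
    by (simp_all add: vadd_def rot60_def refl_def)
  have "(\<lambda>v. vadd v s) \<circ> \<sigma> = (\<lambda>v. vadd ((rot60 ^^ k) (if b then refl v else v)) (vadd t s))"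
    "(\<lambda>v. vadd v s) \<circ> rot60 \<circ> \<sigma> =
       (\<lambda>v. vadd ((rot60 ^^ Suc k) (if b then refl v else v)) (vadd (rot60 t) s))"
    "refl \<circ> \<sigma> = (\<lambda>v. vadd ((rot60 ^^ (5 * k)) (if \<not> b then refl v else v)) (refl t))"
    unfolding \<sigma> by (simp_all add: fun_eq_iff vadd_assoc rot60_vadd refl_vadd refl_rot60_power refl_refl)
  then show "(\<lambda>v. vadd v s) \<circ> \<sigma> \<in> lattice_symmetries"
    and "(\<lambda>v. vadd v s) \<circ> rot60 \<circ> \<sigma> \<in> lattice_symmetries"
    and "refl \<circ> \<sigma> \<in> lattice_symmetries"
    unfolding lattice_symmetries_iff by blast+
qed

lemma quasi_regular_image:
  assumes "X \<in> quasi_regular" "induces \<tau> \<psi>"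
    and "\<And>\<sigma>. \<sigma> \<in> lattice_symmetries \<Longrightarrow> \<tau> \<circ> \<sigma> \<in> lattice_symmetries"
  shows "\<psi> ` X \<in> quasi_regular"
proof -
  obtain \<sigma> H r where X: "X = face_image \<sigma> H" "\<sigma> \<in> lattice_symmetries" "r \<ge> 1"
    "H \<in> {E0 r, EB1 r, EB2 r, EB3 r, EB4 r, EB5 r}"
    using assms(1) unfolding quasi_regular_def by blast
  obtain \<phi> where \<phi>: "induces \<sigma> \<phi>" using lattice_symmetry_induces[OF X(2)] .
  have "\<psi> ` X = face_image (\<tau> \<circ> \<sigma>) H"
    unfolding X(1) induces_face_image[OF \<phi>] induces_face_image[OF induces_comp[OF assms(2) \<phi>]]
    by (simp add: image_comp)
  then show ?thesis
    using assms(3)[OF X(2)] X(3,4) unfolding quasi_regular_def by blast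
qed

lemma quasi_regular_shift: "X \<in> quasi_regular \<Longrightarrow> face_shift t ` X \<in> quasi_regular"
  by (rule quasi_regular_image[OF _ induces_shift lattice_symmetries_closed(1)])

lemma quasi_regular_rot: "X \<in> quasi_regular \<Longrightarrow> face_shift t ` face_rot ` X \<in> quasi_regular"
  using quasi_regular_image[OF _ induces_comp[OF induces_shift induces_rot]
      lattice_symmetries_closed(2), of X t]
  by (simp add: image_comp)

lemma quasi_regular_refl: "X \<in> quasi_regular \<Longrightarrow> face_refl ` X \<in> quasi_regular"
  by (rule quasi_regular_image[OF _ induces_refl lattice_symmetries_closed(3)])

lemma quasi_regular_base:
  assumes "r \<ge> 1" "H \<in> {E0 r, EB1 r, EB2 r, EB3 r, EB4 r, EB5 r}"
  shows "H \<in> quasi_regular"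
proof -
  have "id \<in> lattice_symmetries"
    using lattice_symmetries_iff[of id] by (auto simp: fun_eq_iff vadd_def intro!: exI[of _ 0])
  moreover have "face_image id H = H"
    using induces_face_image[of id id] by (simp add: induces_def)
  ultimately show ?thesis
    using assms unfolding quasi_regular_def by blast
qed

lemma hexagon_rot:
  "face_shift (d - c, - a) ` face_rot ` hexagon d a b c =
     hexagon (2 * d - a - b - c) (d - c - a) (d - a - b) (d - b - c)"
  unfolding hexagon_def face_rot_coord_box face_shift_coord_box by (simp add: algebra_simps)

lemma hexagon_refl: "face_refl ` hexagon d a b c = hexagon d a c b"
  unfolding hexagon_def face_refl_coord_box by simp

section \<open>The enclosing hexagon of a polyiamond\<close>

lemma connected_image_interval:
  assumes "polyiamond P" and lipschitz: "\<And>f g. adjacent f g \<Longrightarrow> \<bar>c f - c g\<bar> \<le> (1::int)"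
  shows "c ` P = {Min (c ` P)..Max (c ` P)}"
proof -
  have fin: "finite (c ` P)" and ne: "c ` P \<noteq> {}"
    using assms(1) unfolding polyiamond_def by auto
  obtain f where f: "f \<in> P" "c f = Min (c ` P)" using Min_in[OF fin ne] by auto
  obtain g where g: "g \<in> P" "c g = Max (c ` P)" using Max_in[OF fin ne] by auto
  have path: "(f, g) \<in> {(a, b). a \<in> P \<and> b \<in> P \<and> adjacent a b}\<^sup>*"
    using assms(1) f g unfolding polyiamond_def face_connected_def by blast
  have reach: "v \<in> c ` P"
    if "c f \<le> v" "v \<le> c h" "(f, h) \<in> {(a, b). a \<in> P \<and> b \<in> P \<and> adjacent a b}\<^sup>*" for v h
    using that(3,1,2)
  proof (induction arbitrary: v rule: rtrancl_induct)
    case base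
    with \<open>f \<in> P\<close> show ?case by force
  next
    case (step h h')
    show ?case
    proof (cases "v \<le> c h")
      case True
      with step show ?thesis by blast
    next
      case False
      with step lipschitz[of h h'] have "v = c h'" by auto
      with step show ?thesis by blast
    qed
  qed
  have "{Min (c ` P)..Max (c ` P)} \<subseteq> c ` P"
    using reach[OF _ _ path] f g by auto
  moreover have "c ` P \<subseteq> {Min (c ` P)..Max (c ` P)}" using fin by auto
  ultimately show ?thesis by blast
qed

lemma card_connected_image:
  assumes "polyiamond P" "\<And>f g. adjacent f g \<Longrightarrow> \<bar>c f - c g\<bar> \<le> (1::int)"
  shows "int (card (c ` P)) = Max (c ` P) - Min (c ` P) + 1"
proof -
  have "Min (c ` P) \<le> Max (c ` P)"
    using assms(1) unfolding polyiamond_def by simp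
  moreover have "card (c ` P) = card {Min (c ` P)..Max (c ` P)}"
    using arg_cong[where f = card, OF connected_image_interval[OF assms]] .
  ultimately show ?thesis by simp
qed

lemma hexagon_shift_coord_box:
  "face_shift (s, t) ` hexagon d a b c =
     coord_box s (d - b - 1 + s) t (d - c - 1 + t) (a + s + t) (d - 1 + s + t)"
  unfolding hexagon_def face_shift_coord_box by simp

lemma polyiamond_bounding_hexagon:
  assumes "polyiamond P"
  obtains d a b c s t where "0 \<le> a" "0 \<le> b" "0 \<le> c" "a + b \<le> d" "b + c \<le> d" "c + a \<le> d"
    and "P \<subseteq> face_shift (s, t) ` hexagon d a b c" and "3 * d - a - b - c = int (row_count P)"
proof -
  have fin: "finite P" and ne: "P \<noteq> {}" using assms unfolding polyiamond_def by auto
  define x0 where "x0 = Min (row_x ` P)"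
  define x1 where "x1 = Max (row_x ` P)"
  define y0 where "y0 = Min (row_y ` P)"
  define y1 where "y1 = Max (row_y ` P)"
  define z0 where "z0 = Min (row_z ` P)"
  define z1 where "z1 = Max (row_z ` P)"
  have bounds: "x0 \<le> row_x f" "row_x f \<le> x1" "y0 \<le> row_y f" "row_y f \<le> y1" "z0 \<le> row_z f" "row_z f \<le> z1"
    if "f \<in> P" for f
    using that fin unfolding x0_def x1_def y0_def y1_def z0_def z1_def by simp_all
  have "x0 + y0 \<le> row_z f" "row_x f \<le> z1 - y0" "row_y f \<le> z1 - x0"
    "z0 - x1 - 1 \<le> row_y f" "row_z f \<le> x1 + y1 + 1" "z0 - y1 - 1 \<le> row_x f" if "f \<in> P" for f
    using bounds[OF that] row_z_bounds[of f] by linarith+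
  then have tight: "x0 + y0 \<le> z0" "x1 \<le> z1 - y0" "y1 \<le> z1 - x0"
    "z0 - x1 - 1 \<le> y0" "z1 \<le> x1 + y1 + 1" "z0 - y1 - 1 \<le> x0"
    using fin ne unfolding x0_def x1_def y0_def y1_def z0_def z1_def
    by (simp_all add: Min_ge_iff Max_le_iff)
  have rows: "int (card (row_x ` P)) = x1 - x0 + 1" "int (card (row_y ` P)) = y1 - y0 + 1"
    "int (card (row_z ` P)) = z1 - z0 + 1"
    unfolding x0_def x1_def y0_def y1_def z0_def z1_def using adjacent_rows_close
    by (auto intro!: card_connected_image[OF assms])
  define d a b c where "d = z1 - x0 - y0 + 1" "a = z0 - x0 - y0"
    "b = z1 - y0 - x1" "c = z1 - x0 - y1"
  show thesis
  proof
    show "0 \<le> a" "0 \<le> b" "0 \<le> c" "a + b \<le> d" "b + c \<le> d" "c + a \<le> d"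
      using tight unfolding d_a_b_c_def by linarith+
    show "P \<subseteq> face_shift (x0, y0) ` hexagon d a b c"
      unfolding hexagon_shift_coord_box d_a_b_c_def using bounds by (auto simp: coord_box_def)
    show "3 * d - a - b - c = int (row_count P)"
      using rows unfolding row_count_def d_a_b_c_def by simp
  qed
qed

section \<open>The isoperimetric inequality for hexagons\<close>

text \<open>The least value of \<open>2((a - b)\<^sup>2 + (b - c)\<^sup>2 + (c - a)\<^sup>2) + 3(2d - q)\<^sup>2\<close> over hexagons of
  perimeter \<open>q = 3d - a - b - c\<close>: the second term is positive for odd \<open>q\<close>, and \<open>a = b = c\<close>
  forces \<open>3 dvd q\<close>.\<close>

definition isoperimetric_defect :: "int \<Rightarrow> int" where
  "isoperimetric_defect q = (if even q then 0 else 3) + (if 3 dvd q then 0 else 4)"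

lemma hexagon_area_identity:
  fixes q d a b c :: int
  assumes "q = 3 * d - a - b - c"
  shows "q\<^sup>2 - 6 * (d * d - a * a - b * b - c * c) =
    2 * ((a - b)\<^sup>2 + (b - c)\<^sup>2 + (c - a)\<^sup>2) + 3 * (2 * d - q)\<^sup>2"
  unfolding assms by (simp add: power2_eq_square algebra_simps)

lemma one_le_square: "x \<noteq> 0 \<Longrightarrow> 1 \<le> (x::int)\<^sup>2"
  using abs_le_square_iff[of 1 x] by (cases "x < 0") auto

lemma hexagon_isoperimetric:
  fixes q d a b c :: int
  assumes "q = 3 * d - a - b - c"
  shows "6 * (d * d - a * a - b * b - c * c) \<le> q\<^sup>2 - isoperimetric_defect q"
proof -
  have "odd q \<Longrightarrow> 2 * d - q \<noteq> 0" by presburger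
  then have "(if even q then 0 else 3) \<le> 3 * (2 * d - q)\<^sup>2"
    using one_le_square[of "2 * d - q"] by auto
  moreover have "(if 3 dvd q then 0 else 4) \<le> 2 * ((a - b)\<^sup>2 + (b - c)\<^sup>2 + (c - a)\<^sup>2)"
  proof (cases "a = b \<and> b = c")
    case False
    then have "a - b \<noteq> 0 \<and> b - c \<noteq> 0 \<or> b - c \<noteq> 0 \<and> c - a \<noteq> 0 \<or> c - a \<noteq> 0 \<and> a - b \<noteq> 0"
      by auto
    then have "2 \<le> (a - b)\<^sup>2 + (b - c)\<^sup>2 + (c - a)\<^sup>2"
      using one_le_square[of "a - b"] one_le_square[of "b - c"] one_le_square[of "c - a"]
        zero_le_power2[of "a - b"] zero_le_power2[of "b - c"] zero_le_power2[of "c - a"]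
      by linarith
    then show ?thesis by auto
  qed (use assms in auto)
  ultimately show ?thesis
    using hexagon_area_identity[OF assms] unfolding isoperimetric_defect_def by linarith
qed

lemma abs_le_one_if_square_le_three: "(x::int)\<^sup>2 \<le> 3 \<Longrightarrow> \<bar>x\<bar> \<le> 1"
  using abs_le_square_iff[of 2 x] by simp

lemma sorted_three_wlog:
  fixes P :: "'a::linorder \<Rightarrow> 'a \<Rightarrow> 'a \<Rightarrow> bool"
  assumes sorted: "\<And>a b c. a \<le> b \<Longrightarrow> b \<le> c \<Longrightarrow> P a b c"
    and swap: "\<And>a b c. P a b c \<Longrightarrow> P a c b"
    and rotate: "\<And>a b c. P a b c \<Longrightarrow> P c a b"
  shows "P a b c"
  by (metis linorder_le_cases sorted swap rotate)

section \<open>Hexagons of least defect are quasi-regular\<close>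

lemma base_hexagons_eq:
  assumes "1 \<le> r"
  shows "{E0 r, EB1 r, EB2 r, EB3 r, EB4 r, EB5 r} =
    {hexagon (3 * int r) (int r) (int r) (int r), hexagon (3 * int r) (int r - 1) (int r) (int r),
     hexagon (3 * int r + 1) (int r) (int r) (int r + 1), hexagon (3 * int r + 1) (int r) (int r) (int r),
     hexagon (3 * int r + 2) (int r) (int r + 1) (int r + 1),
     hexagon (3 * int r + 2) (int r) (int r) (int r + 1)}"
  using assms unfolding E0_def EB1_def EB2_def EB3_def EB4_def EB5_def T_hex_eq_hexagon
  by (simp add: of_nat_diff ac_simps)

lemma quasi_regular_base_hexagons:
  fixes r :: int
  assumes "1 \<le> r"
  shows "hexagon (3 * r) r r r \<in> quasi_regular" "hexagon (3 * r) (r - 1) r r \<in> quasi_regular"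
    "hexagon (3 * r + 1) r r (r + 1) \<in> quasi_regular" "hexagon (3 * r + 1) r r r \<in> quasi_regular"
    "hexagon (3 * r + 2) r (r + 1) (r + 1) \<in> quasi_regular"
    "hexagon (3 * r + 2) r r (r + 1) \<in> quasi_regular"
proof -
  obtain n where n: "1 \<le> n" "r = int n"
    using assms by (intro that[of "nat r"]) auto
  from quasi_regular_base[OF n(1)] show "hexagon (3 * r) r r r \<in> quasi_regular"
    "hexagon (3 * r) (r - 1) r r \<in> quasi_regular"
    "hexagon (3 * r + 1) r r (r + 1) \<in> quasi_regular" "hexagon (3 * r + 1) r r r \<in> quasi_regular"
    "hexagon (3 * r + 2) r (r + 1) (r + 1) \<in> quasi_regular"
    "hexagon (3 * r + 2) r r (r + 1) \<in> quasi_regular"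
    unfolding base_hexagons_eq[OF n(1)] n(2) by simp_all
qed

lemma quasi_regular_hexagon_sorted:
  fixes d a b c :: int
  assumes "a \<le> b" "b \<le> c" "c \<le> a + 1" "a + b + c \<le> d" "d \<le> a + b + c + 1" "6 \<le> 3 * d - a - b - c"
  shows "hexagon d a b c \<in> quasi_regular"
proof -
  have "b = a \<and> c = a \<or> b = a \<and> c = a + 1 \<or> b = a + 1 \<and> c = a + 1"
    using assms(1-3) by arith
  moreover have "d = a + b + c \<or> d = a + b + c + 1"
    using assms(4,5) by arith
  ultimately show ?thesis
  proof (elim disjE conjE)
    assume "b = a" "c = a" "d = a + b + c"
    moreover from this assms(6) have "1 \<le> a" by presburger
    ultimately show ?thesis using quasi_regular_base_hexagons(1)[of a]
      by (simp add: algebra_simps)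
  next
    assume "b = a" "c = a" "d = a + b + c + 1"
    moreover from this assms(6) have "1 \<le> a" by presburger
    ultimately show ?thesis using quasi_regular_base_hexagons(4)[of a]
      by (simp add: algebra_simps)
  next
    assume "b = a" "c = a + 1" "d = a + b + c"
    moreover from this assms(6) have "1 \<le> a" by presburger
    ultimately show ?thesis using quasi_regular_base_hexagons(3)[of a]
      by (simp add: algebra_simps)
  next
    assume "b = a" "c = a + 1" "d = a + b + c + 1"
    moreover from this assms(6) have "1 \<le> a" by presburger
    ultimately show ?thesis using quasi_regular_base_hexagons(6)[of a]
      by (simp add: algebra_simps)
  next
    assume "b = a + 1" "c = a + 1" "d = a + b + c"
    moreover from this assms(6) have "1 \<le> a" by presburger
    ultimately show ?thesis using quasi_regular_base_hexagons(5)[of a]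
      by (simp add: algebra_simps)
  next
    assume "b = a + 1" "c = a + 1" "d = a + b + c + 1"
    moreover from this assms(6) have "1 \<le> a + 1" by presburger
    ultimately show ?thesis using quasi_regular_base_hexagons(2)[of "a + 1"]
      by (simp add: algebra_simps)
  qed
qed

lemma quasi_regular_hexagon_rot:
  "hexagon d a b c \<in> quasi_regular \<Longrightarrow>
     hexagon (2 * d - a - b - c) (d - c - a) (d - a - b) (d - b - c) \<in> quasi_regular"
  using quasi_regular_rot[of "hexagon d a b c" "(d - c, - a)"] by (simp add: hexagon_rot)

lemma quasi_regular_hexagon_swap: "hexagon d a b c \<in> quasi_regular \<Longrightarrow> hexagon d a c b \<in> quasi_regular"
  using quasi_regular_refl[of "hexagon d a b c"] by (simp add: hexagon_refl)

lemma quasi_regular_hexagon_cycle: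
  assumes "hexagon d a b c \<in> quasi_regular"
  shows "hexagon d c a b \<in> quasi_regular"
  using quasi_regular_hexagon_rot[OF quasi_regular_hexagon_rot[OF assms]]
  by (simp add: algebra_simps)

lemma quasi_regular_hexagon_half:
  fixes d a b c :: int
  assumes "a + b + c \<le> d" "d \<le> a + b + c + 1" "6 \<le> 3 * d - a - b - c"
    and "\<bar>a - b\<bar> \<le> 1" "\<bar>b - c\<bar> \<le> 1" "\<bar>c - a\<bar> \<le> 1"
  shows "hexagon d a b c \<in> quasi_regular"
proof -
  let ?P = "\<lambda>a b c. a + b + c \<le> d \<and> d \<le> a + b + c + 1 \<and> 6 \<le> 3 * d - a - b - c \<and>
    \<bar>a - b\<bar> \<le> 1 \<and> \<bar>b - c\<bar> \<le> 1 \<and> \<bar>c - a\<bar> \<le> 1 \<longrightarrow> hexagon d a b c \<in> quasi_regular"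
  have "?P a b c"
  proof (rule sorted_three_wlog[of ?P])
    fix a b c :: int
    assume "a \<le> b" "b \<le> c"
    then show "?P a b c"
      using quasi_regular_hexagon_sorted[of a b c d] by auto
  next
    fix a b c :: int
    assume "?P a b c"
    moreover have "\<bar>a - c\<bar> = \<bar>c - a\<bar>" "\<bar>c - b\<bar> = \<bar>b - c\<bar>" "\<bar>b - a\<bar> = \<bar>a - b\<bar>"
      by (simp_all add: abs_minus_commute)
    ultimately show "?P a c b" "?P c a b"
      using quasi_regular_hexagon_swap[of d a b c] quasi_regular_hexagon_cycle[of d a b c]
      by (simp_all add: algebra_simps)
  qed
  with assms show ?thesis by blast
qed

lemma quasi_regular_hexagon_balanced:
  fixes q d a b c :: int
  assumes "q = 3 * d - a - b - c" "6 \<le> q" "\<bar>2 * d - q\<bar> \<le> 1"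
    and "\<bar>a - b\<bar> \<le> 1" "\<bar>b - c\<bar> \<le> 1" "\<bar>c - a\<bar> \<le> 1"
  shows "hexagon d a b c \<in> quasi_regular"
proof (cases "2 * d \<le> q")
  case True
  with assms show ?thesis by (intro quasi_regular_hexagon_half) auto
next
  case False
  with assms(1,3) have "2 * d = q + 1" by auto
  with assms have "hexagon (2 * d - a - b - c) (d - c - a) (d - a - b) (d - b - c) \<in> quasi_regular"
    by (intro quasi_regular_hexagon_half) (auto simp: algebra_simps)
  from quasi_regular_hexagon_rot[OF this] have "hexagon d c a b \<in> quasi_regular"
    by (simp add: algebra_simps)
  then show ?thesis
    using quasi_regular_hexagon_cycle by blast
qed

lemma quasi_regular_hexagon_extremal:
  fixes q d a b c :: int
  assumes "q = 3 * d - a - b - c" "6 \<le> q"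
    and "6 * (d * d - a * a - b * b - c * c) = q\<^sup>2 - isoperimetric_defect q"
  shows "hexagon d a b c \<in> quasi_regular"
proof -
  have "isoperimetric_defect q \<le> 7"
    by (simp add: isoperimetric_defect_def)
  then have sum7: "2 * ((a - b)\<^sup>2 + (b - c)\<^sup>2 + (c - a)\<^sup>2) + 3 * (2 * d - q)\<^sup>2 \<le> 7"
    using hexagon_area_identity[OF assms(1)] assms(3) by linarith
  have bound: "W \<le> 3 \<and> X \<le> 3 \<and> Y \<le> 3 \<and> Z \<le> 3"
    if "2 * (X + Y + Z) + 3 * W \<le> 7" "0 \<le> X" "0 \<le> Y" "0 \<le> Z" "0 \<le> W" for X Y Z W :: int
    using that by arith
  have "(2 * d - q)\<^sup>2 \<le> 3 \<and> (a - b)\<^sup>2 \<le> 3 \<and> (b - c)\<^sup>2 \<le> 3 \<and> (c - a)\<^sup>2 \<le> 3"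
    using bound[OF sum7] by simp
  with assms(1,2) show ?thesis
    by (intro quasi_regular_hexagon_balanced abs_le_one_if_square_le_three) auto
qed

lemma balanced_hexagon_area:
  fixes q d a b c :: int
  assumes "q = 3 * d - a - b - c" "\<bar>2 * d - q\<bar> \<le> 1"
    and "\<bar>a - b\<bar> \<le> 1" "\<bar>b - c\<bar> \<le> 1" "\<bar>c - a\<bar> \<le> 1"
  shows "q\<^sup>2 - isoperimetric_defect q = 6 * (d * d - a * a - b * b - c * c)"
proof -
  have square: "x\<^sup>2 = \<bar>x\<bar>" if "\<bar>x\<bar> \<le> 1" for x :: int
  proof -
    from that have "x = -1 \<or> x = 0 \<or> x = 1" by arith
    then show ?thesis by auto
  qed
  have "\<bar>2 * d - q\<bar> = (if even q then 0 else 1)"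
    using assms(2) by presburger
  moreover have "3 dvd q \<longleftrightarrow> 3 dvd (a + b + c)"
    using assms(1) by presburger
  moreover have "\<bar>a - b\<bar> + \<bar>b - c\<bar> + \<bar>c - a\<bar> = (if 3 dvd (a + b + c) then 0 else 2)"
    using assms(3-5) by presburger
  ultimately show ?thesis
    using hexagon_area_identity[OF assms(1)] square assms(2-5)
    unfolding isoperimetric_defect_def by (simp split: if_splits)
qed

lemma base_hexagon_balanced:
  assumes "1 \<le> r" "H \<in> {E0 r, EB1 r, EB2 r, EB3 r, EB4 r, EB5 r}"
  obtains d a b c where "H = hexagon d a b c"
    and "0 \<le> a" "0 \<le> b" "0 \<le> c" "a + b \<le> d" "b + c \<le> d" "c + a \<le> d"
    and "6 \<le> 3 * d - a - b - c" "\<bar>2 * d - (3 * d - a - b - c)\<bar> \<le> 1"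
    and "\<bar>a - b\<bar> \<le> 1" "\<bar>b - c\<bar> \<le> 1" "\<bar>c - a\<bar> \<le> 1"
proof -
  let ?r = "int r"
  from assms(2) consider "H = hexagon (3 * ?r) ?r ?r ?r" | "H = hexagon (3 * ?r) (?r - 1) ?r ?r"
    | "H = hexagon (3 * ?r + 1) ?r ?r (?r + 1)" | "H = hexagon (3 * ?r + 1) ?r ?r ?r"
    | "H = hexagon (3 * ?r + 2) ?r (?r + 1) (?r + 1)" | "H = hexagon (3 * ?r + 2) ?r ?r (?r + 1)"
    unfolding base_hexagons_eq[OF assms(1)] by blast
  then show thesis
    using assms(1) by cases (auto intro: that)
qed

lemma quasi_regular_isoperimetric:
  assumes "E \<in> quasi_regular"
  obtains q where "6 \<le> q" "int (edge_perimeter E) \<le> q" "int (site_perimeter E) \<le> q"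
    "q\<^sup>2 - isoperimetric_defect q = 6 * int (area E)"
proof -
  obtain \<sigma> H r where E: "E = face_image \<sigma> H" "\<sigma> \<in> lattice_symmetries" "r \<ge> 1"
    "H \<in> {E0 r, EB1 r, EB2 r, EB3 r, EB4 r, EB5 r}"
    using assms unfolding quasi_regular_def by blast
  obtain \<phi> where \<phi>: "induces \<sigma> \<phi>" using lattice_symmetry_induces[OF E(2)] .
  obtain d a b c where H: "H = hexagon d a b c"
    and valid: "0 \<le> a" "0 \<le> b" "0 \<le> c" "a + b \<le> d" "b + c \<le> d" "c + a \<le> d"
    and q: "6 \<le> 3 * d - a - b - c" "\<bar>2 * d - (3 * d - a - b - c)\<bar> \<le> 1"
    and balanced: "\<bar>a - b\<bar> \<le> 1" "\<bar>b - c\<bar> \<le> 1" "\<bar>c - a\<bar> \<le> 1"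
    using base_hexagon_balanced[OF E(3,4)] .
  have E_H: "area E = area H" "edge_perimeter E = edge_perimeter H" "site_perimeter E = site_perimeter H"
    unfolding E(1) induces_face_image[OF \<phi>] by (simp_all add: induces_perimeters[OF \<phi>])
  show thesis
  proof (rule that[OF q(1)])
    have "edge_perimeter H \<le> row_count H" "site_perimeter H \<le> row_count H"
      unfolding H hexagon_def by (rule edge_perimeter_coord_box site_perimeter_coord_box)+
    then show "int (edge_perimeter E) \<le> 3 * d - a - b - c" "int (site_perimeter E) \<le> 3 * d - a - b - c"
      using row_count_hexagon[OF valid] unfolding E_H H by linarith+
    have "int (area E) = d * d - a * a - b * b - c * c"
      using card_hexagon[OF valid] E_H(1) unfolding H area_def by simp
    then show "(3 * d - a - b - c)\<^sup>2 - isoperimetric_defect (3 * d - a - b - c) = 6 * int (area E)"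
      using balanced_hexagon_area[OF refl q(2) balanced] by simp
  qed
qed

lemma quasi_regular_if_row_count_le:
  assumes "polyiamond P" "int (row_count P) \<le> q" "6 \<le> q"
    and "q\<^sup>2 - isoperimetric_defect q \<le> 6 * int (area P)"
  shows "P \<in> quasi_regular"
proof -
  obtain d a b c s t where valid: "0 \<le> a" "0 \<le> b" "0 \<le> c" "a + b \<le> d" "b + c \<le> d" "c + a \<le> d"
    and sub: "P \<subseteq> face_shift (s, t) ` hexagon d a b c" and q': "3 * d - a - b - c = int (row_count P)"
    using polyiamond_bounding_hexagon[OF assms(1)] .
  let ?q' = "3 * d - a - b - c"
  define A where "A = d * d - a * a - b * b - c * c"
  have card: "int (card (face_shift (s, t) ` hexagon d a b c)) = A"
    using card_hexagon[OF valid] induces_perimeters(1)[OF induces_shift] by (simp add: area_def A_def)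
  have "card P \<le> card (face_shift (s, t) ` hexagon d a b c)"
    using sub by (intro card_mono) (simp_all add: finite_coord_box hexagon_def)
  then have PA: "6 * int (area P) \<le> 6 * A"
    using card unfolding area_def by linarith
  have iso: "6 * A \<le> ?q'\<^sup>2 - isoperimetric_defect ?q'"
    unfolding A_def by (rule hexagon_isoperimetric) simp
  txt \<open>A smaller perimeter cannot carry the area, as \<open>(q - 1)\<^sup>2 < q\<^sup>2 - 7\<close> for \<open>q \<ge> 6\<close>.\<close>
  have "?q' = q"
  proof (rule ccontr)
    assume "?q' \<noteq> q"
    with assms(2) q' have "?q' \<le> q - 1" "0 \<le> ?q'" by linarith+
    then have "?q'\<^sup>2 \<le> (q - 1)\<^sup>2" by (rule power_mono)
    moreover have "0 \<le> isoperimetric_defect ?q'" "isoperimetric_defect q \<le> 7"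
      by (simp_all add: isoperimetric_defect_def)
    ultimately show False
      using assms(3,4) PA iso by (simp add: power2_eq_square algebra_simps)
  qed
  with iso have "6 * A \<le> q\<^sup>2 - isoperimetric_defect q" by simp
  with PA assms(4) have "6 * A = q\<^sup>2 - isoperimetric_defect q" "int (area P) = A"
    by linarith+
  then have "hexagon d a b c \<in> quasi_regular" "card P = card (face_shift (s, t) ` hexagon d a b c)"
    using quasi_regular_hexagon_extremal[OF refl] assms(3) \<open>?q' = q\<close> card
    unfolding area_def A_def by simp_all
  then show ?thesis
    using sub quasi_regular_shift card_subset_eq[OF _ sub]
    by (metis finite_coord_box finite_imageI hexagon_def)
qed

theorem lemma7p5:
  assumes "E \<in> quasi_regular"
    and "polyiamond P"
    and "P \<notin> quasi_regular"
    and "area P \<ge> area E"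
  shows "edge_perimeter P > edge_perimeter E \<and> site_perimeter P > site_perimeter E"
proof -
  obtain q where q: "6 \<le> q" "int (edge_perimeter E) \<le> q" "int (site_perimeter E) \<le> q"
    and area: "q\<^sup>2 - isoperimetric_defect q = 6 * int (area E)"
    using quasi_regular_isoperimetric[OF assms(1)] .
  have finite: "finite P" using assms(2) unfolding polyiamond_def by simp
  have many_rows: "\<not> int (row_count P) \<le> q"
    using quasi_regular_if_row_count_le[OF assms(2) _ q(1)] area assms(3,4) by force
  then show ?thesis
    using row_count_le_edge_perimeter[OF finite] row_count_le_site_perimeter[OF finite] q(2,3)
    by linarith
qed

end
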